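(* For a flat layout $L$, the following are equivalent: (1) $L$ is compact; (2) $\mathrm{coal}^\flat(L)$ is compact; (3) $\mathrm{squeeze}(L)$ is compact; (4) $\mathrm{sort}(L)$ is compact.
   Context: A flat layout $L=(s_1,\dots,s_m):(d_1,\dots,d_m)$ has positive integer shape entries and nonnegative integer stride entries, with modes $s_i:d_i$; $\mathrm{size}(L)=\prod s_i$, $\mathrm{cosize}(L)=1+\sum(s_i-1)d_i$. Layout function: $\Phi_L(x)=\sum x_id_i$ with $x_i=\lfloor x/(s_1\cdots s_{i-1})\rfloor\bmod s_i$ on $[0,\mathrm{size}(L))$. $L$ is compact if $\Phi_L:[0,\mathrm{size}(L))\to[0,\mathrm{cosize}(L))$ is a bijection. $\mathrm{squeeze}(L)$ removes modes with $s_i=1$. $\mathrm{coal}^\flat(L)$ is obtained from $\mathrm{squeeze}(L)$ by repeatedly replacing adjacent modes $s_i,s_{i+1}:d_i,d_{i+1}$ with $d_{i+1}=s_id_i$ by $s_is_{i+1}:d_i$. Order pairs by $s:d\preceq s':d'$ iff $d<d'$ or ($d=d'$ and $s\le s'$); $\mathrm{sort}(L)$ reorders the modes (stably) into $\preceq$-nondecreasing order. *)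

theory Defs
  imports Main "HOL-Library.Product_Lexorder"
begin

text \<open>A flat layout is a list of modes (s_i, d_i): shape s_i, stride d_i.
  Shapes are required to be positive (predicate flat_layout).\<close>

type_synonym layout = "(nat \<times> nat) list"

definition flat_layout :: "layout \<Rightarrow> bool" where
  "flat_layout L \<longleftrightarrow> (\<forall>m \<in> set L. fst m > 0)"

definition lsize :: "layout \<Rightarrow> nat" where
  "lsize L = (\<Prod>i<length L. fst (L ! i))"

definition lcosize :: "layout \<Rightarrow> nat" where
  "lcosize L = 1 + (\<Sum>i<length L. (fst (L ! i) - 1) * snd (L ! i))"

definition coord :: "layout \<Rightarrow> nat \<Rightarrow> nat \<Rightarrow> nat" where
  "coord L x i = (x div (\<Prod>j<i. fst (L ! j))) mod fst (L ! i)"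

definition layout_fun :: "layout \<Rightarrow> nat \<Rightarrow> nat" where
  "layout_fun L x = (\<Sum>i<length L. coord L x i * snd (L ! i))"

definition compact :: "layout \<Rightarrow> bool" where
  "compact L \<longleftrightarrow> bij_betw (layout_fun L) {0..<lsize L} {0..<lcosize L}"

definition squeeze :: "layout \<Rightarrow> layout" where
  "squeeze L = filter (\<lambda>m. fst m \<noteq> 1) L"

text \<open>Exhaustive merging of adjacent modes s_i, s_(i+1) : d_i, d_(i+1) with
  d_(i+1) = s_i * d_i into s_i * s_(i+1) : d_i.\<close>
fun coal_aux :: "layout \<Rightarrow> layout" where
  "coal_aux [] = []"
| "coal_aux ((s, d) # L) =
     (case coal_aux L of
        [] \<Rightarrow> [(s, d)]
      | (s', d') # R \<Rightarrow>
          (if d' = s * d then (s * s', d) # R else (s, d) # (s', d') # R))"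

definition coal_flat :: "layout \<Rightarrow> layout" where
  "coal_flat L = coal_aux (squeeze L)"

text \<open>Stable sort w.r.t. s:d \<preceq> s':d' iff d < d' or (d = d' and s \<le> s'),
  i.e. lexicographic order on the key (d, s); sort_key is stable.\<close>
definition lsort :: "layout \<Rightarrow> layout" where
  "lsort L = sort_key (\<lambda>(s, d). (d, s)) L"

end

theory Submission
  imports Defs "HOL-Library.Multiset" "HOL-Library.Set_Algebras"
begin

text \<open>Removing a mode of shape 1 or merging two modes \<open>s : d\<close>, \<open>s' : s * d\<close> into
  \<open>s * s' : d\<close> changes neither the layout function (the latter is the mixed-radix identity
  \<open>x mod (s * s') = x mod s + s * (x div s mod s')\<close>) nor size and cosize, hence not compactness.
  Reordering does change the layout function, but compactness only depends on size, cosize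
  and the image of the layout function, and that image is the Minkowski sum of the progressions
  \<open>{a * d | a < s}\<close> over all modes, which does not depend on their order.\<close>

lemma lsize_Nil [simp]: "lsize [] = 1"
  by (simp add: lsize_def)

lemma lsize_Cons [simp]: "lsize (m # L) = fst m * lsize L"
  unfolding lsize_def length_Cons prod.lessThan_Suc_shift by simp

lemma lcosize_Nil [simp]: "lcosize [] = 1"
  by (simp add: lcosize_def)

lemma lcosize_Cons [simp]: "lcosize (m # L) = (fst m - 1) * snd m + lcosize L"
  unfolding lcosize_def length_Cons sum.lessThan_Suc_shift by simp

lemma layout_fun_Nil [simp]: "layout_fun [] x = 0"
  by (simp add: layout_fun_def)

lemma layout_fun_Cons [simp]:
  "layout_fun (m # L) x = x mod fst m * snd m + layout_fun L (x div fst m)"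
proof -
  have "coord (m # L) x (Suc i) = coord L (x div fst m) i" for i
    unfolding coord_def prod.lessThan_Suc_shift by (simp add: div_mult2_eq)
  then show ?thesis
    unfolding layout_fun_def length_Cons sum.lessThan_Suc_shift by (simp add: coord_def)
qed

lemma compact_iff_image:
  "compact L \<longleftrightarrow> lsize L = lcosize L \<and> layout_fun L ` {..<lsize L} = {..<lcosize L}"
  by (auto simp: compact_def bij_betw_def inj_on_iff_eq_card atLeast0LessThan)

lemma compact_cong:
  assumes "layout_fun L = layout_fun L'" "lsize L = lsize L'" "lcosize L = lcosize L'"
  shows "compact L \<longleftrightarrow> compact L'"
  using assms by (simp add: compact_def)

lemma layout_fun_squeeze: "layout_fun (squeeze L) = layout_fun L"
  by (induction L) (auto simp: squeeze_def fun_eq_iff)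

lemma lsize_squeeze: "lsize (squeeze L) = lsize L"
  by (induction L) (auto simp: squeeze_def)

lemma lcosize_squeeze: "lcosize (squeeze L) = lcosize L"
  by (induction L) (auto simp: squeeze_def)

lemma compact_squeeze: "compact (squeeze L) \<longleftrightarrow> compact L"
  by (rule compact_cong) (simp_all add: layout_fun_squeeze lsize_squeeze lcosize_squeeze)

lemma flat_layout_squeeze: "flat_layout L \<Longrightarrow> flat_layout (squeeze L)"
  by (simp add: flat_layout_def squeeze_def)

lemma layout_fun_merge: "layout_fun ((s * s', d) # R) = layout_fun ((s, d) # (s', s * d) # R)"
  by (simp add: fun_eq_iff mod_mult2_eq div_mult2_eq algebra_simps)

lemma lcosize_merge:
  assumes "0 < s'"
  shows "lcosize ((s * s', d) # R) = lcosize ((s, d) # (s', s * d) # R)"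
proof -
  have "(s * s' - 1) * d = (s - 1) * d + (s' - 1) * (s * d)"
    using assms by (cases s; cases s') (simp_all add: algebra_simps)
  then show ?thesis by simp
qed

lemma coal_aux_Cons_cases:
  "coal_aux ((s, d) # L) = (s, d) # coal_aux L
   \<or> (\<exists>s' R. coal_aux L = (s', s * d) # R \<and> coal_aux ((s, d) # L) = (s * s', d) # R)"
  by (auto split: list.split)

lemma flat_layout_coal_aux: "flat_layout L \<Longrightarrow> flat_layout (coal_aux L)"
proof (induction L)
  case (Cons m L)
  obtain s d where m: "m = (s, d)" by fastforce
  from coal_aux_Cons_cases[of s d L] Cons show ?case
    by (force simp: m flat_layout_def)
qed simp

lemma layout_fun_coal_aux: "layout_fun (coal_aux L) = layout_fun L"
proof (induction L)
  case (Cons m L)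
  obtain s d where m: "m = (s, d)" by fastforce
  from coal_aux_Cons_cases[of s d L] show ?case
  proof
    assume "coal_aux ((s, d) # L) = (s, d) # coal_aux L"
    then show ?thesis by (simp add: m Cons.IH)
  next
    assume "\<exists>s' R. coal_aux L = (s', s * d) # R \<and> coal_aux ((s, d) # L) = (s * s', d) # R"
    then obtain s' R where "coal_aux L = (s', s * d) # R" "coal_aux ((s, d) # L) = (s * s', d) # R"
      by blast
    then have "layout_fun (coal_aux ((s, d) # L)) = layout_fun ((s, d) # coal_aux L)"
      by (simp add: layout_fun_merge)
    then show ?thesis by (simp add: m Cons.IH)
  qed
qed simp

lemma lsize_coal_aux: "lsize (coal_aux L) = lsize L"
  by (induction L rule: coal_aux.induct) (auto split: list.split)

lemma lcosize_coal_aux: "flat_layout L \<Longrightarrow> lcosize (coal_aux L) = lcosize L"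
proof (induction L)
  case (Cons m L)
  obtain s d where m: "m = (s, d)" by fastforce
  have IH: "lcosize (coal_aux L) = lcosize L"
    using Cons by (simp add: flat_layout_def)
  from coal_aux_Cons_cases[of s d L] show ?case
  proof
    assume "coal_aux ((s, d) # L) = (s, d) # coal_aux L"
    then show ?thesis by (simp add: m IH)
  next
    assume "\<exists>s' R. coal_aux L = (s', s * d) # R \<and> coal_aux ((s, d) # L) = (s * s', d) # R"
    then obtain s' R where tail: "coal_aux L = (s', s * d) # R"
      and head: "coal_aux ((s, d) # L) = (s * s', d) # R"
      by blast
    have "0 < s'"
      using flat_layout_coal_aux[of L] Cons.prems tail by (simp add: flat_layout_def)
    then have "lcosize (coal_aux ((s, d) # L)) = lcosize ((s, d) # coal_aux L)"
      by (simp only: head tail lcosize_merge)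
    then show ?thesis by (simp add: m IH)
  qed
qed simp

lemma compact_coal_flat:
  assumes "flat_layout L"
  shows "compact (coal_flat L) \<longleftrightarrow> compact L"
proof -
  have "flat_layout (squeeze L)"
    using assms by (rule flat_layout_squeeze)
  then have "compact (coal_aux (squeeze L)) \<longleftrightarrow> compact (squeeze L)"
    by (intro compact_cong layout_fun_coal_aux lsize_coal_aux lcosize_coal_aux)
  then show ?thesis
    by (simp add: coal_flat_def compact_squeeze)
qed

definition mode_offsets :: "nat \<times> nat \<Rightarrow> nat set" where
  "mode_offsets m = (\<lambda>a. a * snd m) ` {..<fst m}"

lemma lessThan_mult_eq_image:
  fixes s n :: nat
  shows "{..<s * n} = (\<lambda>(a, w). a + s * w) ` ({..<s} \<times> {..<n})"
proof
  show "(\<lambda>(a, w). a + s * w) ` ({..<s} \<times> {..<n}) \<subseteq> {..<s * n}"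
  proof clarify
    fix a w assume "a < s" "w < n"
    then have "a + s * w < s * Suc w" by simp
    also have "\<dots> \<le> s * n" using \<open>w < n\<close> by (intro mult_le_mono2) simp
    finally show "a + s * w < s * n" .
  qed
  show "{..<s * n} \<subseteq> (\<lambda>(a, w). a + s * w) ` ({..<s} \<times> {..<n})"
  proof
    fix x assume "x \<in> {..<s * n}"
    then have "x < s * n" by simp
    moreover from this have "0 < s" by (auto intro: gr0I)
    ultimately have "x div s < n"
      by (simp add: div_less_iff_less_mult mult.commute)
    with \<open>0 < s\<close> show "x \<in> (\<lambda>(a, w). a + s * w) ` ({..<s} \<times> {..<n})"
      by (intro image_eqI[of _ _ "(x mod s, x div s)"]) auto
  qed
qed

lemma image_layout_fun: "layout_fun L ` {..<lsize L} = (\<Sum>m\<leftarrow>L. mode_offsets m)"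
proof (induction L)
  case (Cons m L)
  obtain s d where m: "m = (s, d)" by fastforce
  have "layout_fun (m # L) ` {..<lsize (m # L)}
      = (\<lambda>(a, w). layout_fun (m # L) (a + s * w)) ` ({..<s} \<times> {..<lsize L})"
    by (simp add: m lessThan_mult_eq_image image_image case_prod_beta)
  also have "\<dots> = (\<lambda>(a, w). a * d + layout_fun L w) ` ({..<s} \<times> {..<lsize L})"
    by (rule image_cong) (auto simp: m)
  also have "\<dots> = mode_offsets m + layout_fun L ` {..<lsize L}"
    by (auto simp: m mode_offsets_def set_plus_def)
  finally show ?case by (simp add: Cons.IH)
qed auto

lemma lsize_eq_prod_list: "lsize L = (\<Prod>m\<leftarrow>L. fst m)"
  by (induction L) simp_all

lemma lcosize_eq_sum_list: "lcosize L = 1 + (\<Sum>m\<leftarrow>L. (fst m - 1) * snd m)"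
  by (induction L) simp_all

lemma compact_mset_cong:
  assumes "mset L = mset L'"
  shows "compact L \<longleftrightarrow> compact L'"
proof -
  have "lsize L = lsize L'"
    unfolding lsize_eq_prod_list
    by (simp only: prod_mset_prod_list[symmetric] mset_map assms)
  moreover have "lcosize L = lcosize L'"
    unfolding lcosize_eq_sum_list
    by (simp only: sum_mset_sum_list[symmetric] mset_map assms)
  moreover have "layout_fun L ` {..<lsize L} = layout_fun L' ` {..<lsize L'}"
    unfolding image_layout_fun
    by (simp only: sum_mset_sum_list[symmetric] mset_map assms)
  ultimately show ?thesis
    by (simp add: compact_iff_image)
qed

lemma compact_lsort: "compact (lsort L) \<longleftrightarrow> compact L"
  by (rule compact_mset_cong) (simp add: lsort_def)

theorem mainTheorem12:
  assumes "flat_layout L"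
  shows "(compact L \<longleftrightarrow> compact (coal_flat L))
       \<and> (compact L \<longleftrightarrow> compact (squeeze L))
       \<and> (compact L \<longleftrightarrow> compact (lsort L))"
  using compact_coal_flat[OF assms] compact_squeeze compact_lsort by simp

end
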